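(* Let $2\le m\le n$. Then $\operatorname{diam}(Y^0_{n,m})=\operatorname{diam}(Y^1_{n,m})=\lfloor n(m+1)/2\rfloor$.
   Context: The Yoke graph $Y_{n,m}$ has vertices the tuples $v=(v_0,\dots,v_{m+1})$ with $v_0,v_{m+1}\in\mathbb{Z}_n$, $v_1,\dots,v_m\in\{0,1\}$, $\sum v_i\equiv0\pmod n$; $u\sim v$ iff there is $0\le i\le m$ with $u_j=v_j$ for $j\notin\{i,i+1\}$ and either ($u_i=v_i+1$, $u_{i+1}=v_{i+1}-1$) or ($u_i=v_i-1$, $u_{i+1}=v_{i+1}+1$), buckets mod $n$. A vertex is identified with $(v_0,\dots,v_m)\in\{0,\dots,n-1\}\times\{0,1\}^m$ (with $v_0$ its least non-negative representative). Equip this set with the dominance order: $(v_0,\dots,v_m)\trianglelefteq(u_0,\dots,u_m)$ iff $\sum_{j=0}^{i}v_j\le\sum_{j=0}^{i}u_j$ for all $0\le i\le m$. Let $\hat0=(0,\dots,0)$, $\hat1=(n-1,1,\dots,1)$, $u_0=(n-1,1,0,\dots,0)$, $u_1=(0,0,1,\dots,1)$; let $I_0=[\hat0,u_0]$ and $I_1=[u_1,\hat1]$ be intervals in this order, and let $Y^0_{n,m}$, $Y^1_{n,m}$ be the subgraphs of $Y_{n,m}$ induced by $I_0$ and $I_1$ respectively (distances measured within these subgraphs). *)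

theory Defs
  imports "HOL-Library.Extended_Nat" "HOL-Number_Theory.Cong"
begin

text \<open>Vertices of the Yoke graph Y_{n,m}, identified with lists (v_0,...,v_m),
  v_0 in {0..n-1}, v_1..v_m in {0,1}. The last bucket v_{m+1} is determined
  by the sum condition.\<close>
definition yoke_vert :: "nat \<Rightarrow> nat \<Rightarrow> nat list \<Rightarrow> bool" where
  "yoke_vert n m v \<longleftrightarrow> length v = m + 1 \<and> v ! 0 < n \<and> (\<forall>i\<in>{1..m}. v ! i \<le> 1)"

definition yoke_ext :: "nat \<Rightarrow> nat \<Rightarrow> nat list \<Rightarrow> nat \<Rightarrow> int" where
  "yoke_ext n m v j = (if j \<le> m then int (v ! j) else (- (\<Sum>k\<le>m. int (v ! k))) mod int n)"

definition yoke_eq :: "nat \<Rightarrow> nat \<Rightarrow> nat \<Rightarrow> int \<Rightarrow> int \<Rightarrow> bool" where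
  "yoke_eq n m j a b \<longleftrightarrow> (if j = 0 \<or> j = m + 1 then [a = b] (mod int n) else a = b)"

definition yoke_adj :: "nat \<Rightarrow> nat \<Rightarrow> nat list \<Rightarrow> nat list \<Rightarrow> bool" where
  "yoke_adj n m u v \<longleftrightarrow> yoke_vert n m u \<and> yoke_vert n m v \<and>
     (\<exists>i\<le>m. (\<forall>j\<le>m+1. j \<noteq> i \<and> j \<noteq> i + 1 \<longrightarrow> yoke_eq n m j (yoke_ext n m u j) (yoke_ext n m v j)) \<and>
        ((yoke_eq n m i (yoke_ext n m u i) (yoke_ext n m v i + 1) \<and>
          yoke_eq n m (i+1) (yoke_ext n m u (i+1)) (yoke_ext n m v (i+1) - 1)) \<or>
         (yoke_eq n m i (yoke_ext n m u i) (yoke_ext n m v i - 1) \<and>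
          yoke_eq n m (i+1) (yoke_ext n m u (i+1)) (yoke_ext n m v (i+1) + 1))))"

definition dominated :: "nat \<Rightarrow> nat list \<Rightarrow> nat list \<Rightarrow> bool" where
  "dominated m v u \<longleftrightarrow> (\<forall>i\<le>m. (\<Sum>j\<le>i. v ! j) \<le> (\<Sum>j\<le>i. u ! j))"

definition dom_interval :: "nat \<Rightarrow> nat \<Rightarrow> nat list \<Rightarrow> nat list \<Rightarrow> nat list set" where
  "dom_interval n m a b = {v. yoke_vert n m v \<and> dominated m a v \<and> dominated m v b}"

definition yoke_bot :: "nat \<Rightarrow> nat list" where
  "yoke_bot m = replicate (m + 1) 0"
definition yoke_top :: "nat \<Rightarrow> nat \<Rightarrow> nat list" where
  "yoke_top n m = (n - 1) # replicate m 1"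
definition yoke_u0 :: "nat \<Rightarrow> nat \<Rightarrow> nat list" where
  "yoke_u0 n m = [n - 1, 1] @ replicate (m - 1) 0"
definition yoke_u1 :: "nat \<Rightarrow> nat list" where
  "yoke_u1 m = [0, 0] @ replicate (m - 1) 1"

definition yoke_I0 :: "nat \<Rightarrow> nat \<Rightarrow> nat list set" where
  "yoke_I0 n m = dom_interval n m (yoke_bot m) (yoke_u0 n m)"
definition yoke_I1 :: "nat \<Rightarrow> nat \<Rightarrow> nat list set" where
  "yoke_I1 n m = dom_interval n m (yoke_u1 m) (yoke_top n m)"

definition walk_in :: "'a set \<Rightarrow> ('a \<Rightarrow> 'a \<Rightarrow> bool) \<Rightarrow> 'a list \<Rightarrow> bool" where
  "walk_in S E xs \<longleftrightarrow> xs \<noteq> [] \<and> set xs \<subseteq> S \<and> (\<forall>i. Suc i < length xs \<longrightarrow> E (xs ! i) (xs ! Suc i))"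

text \<open>Graph distance within the induced subgraph (\<infinity> if unreachable).\<close>
definition induced_dist :: "'a set \<Rightarrow> ('a \<Rightarrow> 'a \<Rightarrow> bool) \<Rightarrow> 'a \<Rightarrow> 'a \<Rightarrow> enat" where
  "induced_dist S E x y = (INF xs \<in> {xs. walk_in S E xs \<and> hd xs = x \<and> last xs = y}. enat (length xs - 1))"

definition induced_diam :: "'a set \<Rightarrow> ('a \<Rightarrow> 'a \<Rightarrow> bool) \<Rightarrow> enat" where
  "induced_diam S E = (SUP x \<in> S. SUP y \<in> S. induced_dist S E x y)"

end

theory Submission
  imports Defs
begin

text \<open>
  A vertex v is encoded by its height function h_v(i) = v_0 + ... + v_i, so that the dominance
  order is the pointwise order of heights. Both I_0 and I_1 consist of the vertices whose heights
  lie between those of two adjacent vertices lo and hi with h_hi - h_lo = (n - 1, n, ..., n); the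
  edge between them wraps bucket 0 around modulo n.

  Every edge changes the potential \<Sum>_i h_v(i) by \<plusminus>1 modulo N = n(m + 1). The potentials of
  vertices of I fill the range from that of lo to that of hi, which is N - 1 larger; hence I contains
  a vertex whose potential exceeds that of lo by \<lfloor>N/2\<rfloor>, and it is at distance at least
  \<lfloor>N/2\<rfloor> from lo.

  Conversely, as long as two vertices of I differ, one of them has an edge inside I lowering a single
  height by one towards the other; so any a, b \<in> I are joined by a walk of length
  D = \<Sum>_i |h_a(i) - h_b(i)|, and also by a walk of length N - |potential difference| through
  the edge hi -- lo. The height difference h_a - h_b changes by at most one per index: if it
  vanishes somewhere then D \<le> m(m + 1)/2 \<le> N/2, and otherwise it has constant sign and D equals
  the potential difference. Either way one of the two walks has length at most \<lfloor>N/2\<rfloor>.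
\<close>

inductive reach_in :: "'a set \<Rightarrow> ('a \<Rightarrow> 'a \<Rightarrow> bool) \<Rightarrow> 'a \<Rightarrow> 'a \<Rightarrow> nat \<Rightarrow> bool"
  for S E where
  reach_in_refl: "x \<in> S \<Longrightarrow> reach_in S E x x 0"
| reach_in_step: "x \<in> S \<Longrightarrow> E x y \<Longrightarrow> reach_in S E y z k \<Longrightarrow> reach_in S E x z (Suc k)"

lemma reach_in_trans: "reach_in S E x y k \<Longrightarrow> reach_in S E y z l \<Longrightarrow> reach_in S E x z (k + l)"
  by (induction rule: reach_in.induct) (auto intro: reach_in.intros)

lemma reach_in_edge: "x \<in> S \<Longrightarrow> y \<in> S \<Longrightarrow> E x y \<Longrightarrow> reach_in S E x y 1"
  using reach_in_step[OF _ _ reach_in_refl] by fastforce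

lemma walk_in_singleton [simp]: "walk_in S E [x] \<longleftrightarrow> x \<in> S"
  by (simp add: walk_in_def)

lemma walk_in_Cons_Cons:
  "walk_in S E (x # y # zs) \<longleftrightarrow> x \<in> S \<and> E x y \<and> walk_in S E (y # zs)"
  unfolding walk_in_def by (auto simp: less_Suc_eq_0_disj)

lemma reach_in_walk:
  "reach_in S E x y k \<Longrightarrow> \<exists>xs. walk_in S E xs \<and> hd xs = x \<and> last xs = y \<and> length xs = Suc k"
proof (induction rule: reach_in.induct)
  case (reach_in_refl x)
  then show ?case by (intro exI[of _ "[x]"]) simp
next
  case (reach_in_step x y z k)
  then obtain xs where xs: "walk_in S E xs" "hd xs = y" "last xs = z" "length xs = Suc k"
    by blast
  then obtain ys where "xs = y # ys" by (cases xs) auto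
  with xs reach_in_step.hyps show ?case
    by (intro exI[of _ "x # xs"]) (simp add: walk_in_Cons_Cons)
qed

lemma induced_dist_le_reach_in: "reach_in S E x y k \<Longrightarrow> induced_dist S E x y \<le> enat k"
  unfolding induced_dist_def
  by (drule reach_in_walk) (force intro: INF_lower2)

definition height :: "nat list \<Rightarrow> nat \<Rightarrow> int" where
  "height v i = (\<Sum>j\<le>i. int (v ! j))"

definition height_sum :: "nat \<Rightarrow> nat list \<Rightarrow> int" where
  "height_sum m v = (\<Sum>i\<le>m. height v i)"

definition height_dist :: "nat \<Rightarrow> nat list \<Rightarrow> nat list \<Rightarrow> int" where
  "height_dist m u v = (\<Sum>i\<le>m. \<bar>height u i - height v i\<bar>)"

lemma height_0 [simp]: "height v 0 = int (v ! 0)"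
  by (simp add: height_def)

lemma height_Suc: "height v (Suc i) = height v i + int (v ! Suc i)"
  by (simp add: height_def)

lemma dominated_iff_height: "dominated m u v \<longleftrightarrow> (\<forall>i\<le>m. height u i \<le> height v i)"
  unfolding dominated_def height_def by (simp flip: of_nat_sum)

lemma height_transfer:
  assumes "\<forall>l\<le>m. int (v ! l) = int (u ! l) - (if l = i then s else 0) + (if l = Suc i then s else 0)
                               + (if l = 0 then t else 0)"
    and "j \<le> m"
  shows "height v j = height u j - (if j = i then s else 0) + t"
proof -
  have "height v j = (\<Sum>l\<le>j. int (u ! l) - (if l = i then s else 0) + (if l = Suc i then s else 0)
                               + (if l = 0 then t else 0))"
    unfolding height_def using assms by (intro sum.cong) auto
  also have "\<dots> = height u j - (if i \<le> j then s else 0) + (if Suc i \<le> j then s else 0) + t"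
    by (simp add: height_def sum.distrib sum_subtractf sum.delta)
  finally show ?thesis by auto
qed

lemma nth_eq_if_height_eq:
  assumes "\<forall>i\<le>m. height u i = height v i" and "j \<le> m"
  shows "u ! j = v ! j"
proof (cases j)
  case (Suc k)
  with assms have "height u (Suc k) = height v (Suc k)" "height u k = height v k" by auto
  then show ?thesis using Suc by (simp add: height_Suc)
qed (use assms in auto)

lemma height_dist_eq_0_iff:
  assumes "length u = Suc m" and "length v = Suc m"
  shows "height_dist m u v = 0 \<longleftrightarrow> u = v"
proof
  assume "height_dist m u v = 0"
  then have "\<forall>i\<le>m. height u i = height v i"
    unfolding height_dist_def by (subst (asm) sum_nonneg_eq_0_iff) auto
  then show "u = v"
    using assms nth_eq_if_height_eq[of m u v] by (auto intro: nth_equalityI)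
qed (simp add: height_dist_def)

lemma height_dist_nonneg: "0 \<le> height_dist m u v"
  unfolding height_dist_def by (simp add: sum_nonneg)

lemma height_dist_commute: "height_dist m u v = height_dist m v u"
  unfolding height_dist_def by (simp add: abs_minus_commute)

lemma height_dist_eq_height_sum_diff:
  assumes "\<forall>i\<le>m. height v i \<le> height u i"
  shows "height_dist m u v = height_sum m u - height_sum m v"
  unfolding height_dist_def height_sum_def using assms by (simp add: sum_subtractf[symmetric])

text \<open>
  An edge moves s = \<plusminus>1 units from bucket i to bucket i + 1. Bucket m + 1 is not stored, and
  t accounts for bucket 0 wrapping around modulo n.
\<close>
definition yoke_move :: "nat \<Rightarrow> nat \<Rightarrow> nat list \<Rightarrow> nat list \<Rightarrow> bool" where
  "yoke_move n m u v \<longleftrightarrow> (\<exists>i\<le>m. \<exists>s t. \<bar>s\<bar> = 1 \<and>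
     (\<forall>l\<le>m. int (v ! l) = int (u ! l) - (if l = i then s else 0) + (if l = Suc i then s else 0)
                           + (if l = 0 then int n * t else 0)))"

lemma yoke_ext_le: "j \<le> m \<Longrightarrow> yoke_ext n m v j = int (v ! j)"
  by (simp add: yoke_ext_def)

lemma yoke_ext_last: "yoke_ext n m v (Suc m) = (- height v m) mod int n"
  by (simp add: yoke_ext_def height_def)

lemma yoke_adj_alt:
  "yoke_adj n m u v \<longleftrightarrow> yoke_vert n m u \<and> yoke_vert n m v \<and>
     (\<exists>i\<le>m. (\<forall>j\<le>m+1. j \<noteq> i \<and> j \<noteq> i + 1 \<longrightarrow>
                   yoke_eq n m j (yoke_ext n m u j) (yoke_ext n m v j)) \<and>
        (\<exists>s. \<bar>s\<bar> = 1 \<and> yoke_eq n m i (yoke_ext n m u i) (yoke_ext n m v i + s) \<and>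
             yoke_eq n m (i+1) (yoke_ext n m u (i+1)) (yoke_ext n m v (i+1) - s)))"
proof -
  have unit: "(\<exists>s::int. \<bar>s\<bar> = 1 \<and> P s) \<longleftrightarrow> P 1 \<or> P (-1)" for P
    by (metis abs_minus_cancel abs_one abs_eq_iff)
  show ?thesis unfolding yoke_adj_def unit by simp
qed

lemma yoke_move_if_adj:
  assumes "yoke_adj n m u v"
  shows "yoke_move n m u v"
proof -
  obtain i s where i: "i \<le> m" and s: "\<bar>s\<bar> = 1"
    and same: "\<forall>j\<le>m+1. j \<noteq> i \<and> j \<noteq> i + 1 \<longrightarrow>
                 yoke_eq n m j (yoke_ext n m u j) (yoke_ext n m v j)"
    and at_i: "yoke_eq n m i (yoke_ext n m u i) (yoke_ext n m v i + s)"
    and at_Suc_i: "yoke_eq n m (i+1) (yoke_ext n m u (i+1)) (yoke_ext n m v (i+1) - s)"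
    using assms unfolding yoke_adj_alt by blast
  have inner: "int (v ! l) = int (u ! l) - (if l = i then s else 0) + (if l = Suc i then s else 0)"
    if "1 \<le> l" "l \<le> m" for l
    using that same[rule_format, of l] at_i at_Suc_i by (auto simp: yoke_eq_def yoke_ext_le)
  have "[int (u ! 0) = int (v ! 0) + (if i = 0 then s else 0)] (mod int n)"
    using same[rule_format, of 0] at_i by (cases "i = 0") (auto simp: yoke_eq_def yoke_ext_le)
  then obtain t where t: "int (v ! 0) + (if i = 0 then s else 0) = int (u ! 0) + int n * t"
    unfolding cong_iff_lin by blast
  have "\<forall>l\<le>m. int (v ! l) = int (u ! l) - (if l = i then s else 0) + (if l = Suc i then s else 0)
                             + (if l = 0 then int n * t else 0)"
    using inner t by (auto simp: Suc_le_eq)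
  with i s show ?thesis unfolding yoke_move_def by blast
qed

lemma yoke_adj_if_move:
  assumes "yoke_vert n m u" "yoke_vert n m v" "yoke_move n m u v"
  shows "yoke_adj n m u v"
proof -
  obtain i s t where i: "i \<le> m" and s: "\<bar>s\<bar> = 1"
    and entries: "\<forall>l\<le>m. int (v ! l) = int (u ! l) - (if l = i then s else 0)
                     + (if l = Suc i then s else 0) + (if l = 0 then int n * t else 0)"
    using assms(3) unfolding yoke_move_def by blast
  have last: "height v m = height u m - (if m = i then s else 0) + int n * t"
    using height_transfer[OF entries, of m] by simp
  have
    "\<forall>j\<le>m+1. j \<noteq> i \<and> j \<noteq> i + 1 \<longrightarrow>
       yoke_eq n m j (yoke_ext n m u j) (yoke_ext n m v j)"
    "yoke_eq n m i (yoke_ext n m u i) (yoke_ext n m v i + s)"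
    "yoke_eq n m (i+1) (yoke_ext n m u (i+1)) (yoke_ext n m v (i+1) - s)"
    using i entries last
    by (auto simp: yoke_eq_def yoke_ext_le yoke_ext_last le_Suc_eq cong_def mod_eq_dvd_iff mod_diff_left_eq)
  with assms(1,2) i s show ?thesis unfolding yoke_adj_alt by blast
qed

lemma yoke_move_sym:
  assumes "yoke_move n m u v"
  shows "yoke_move n m v u"
proof -
  obtain i s t where "i \<le> m" "\<bar>s\<bar> = 1"
    and "\<forall>l\<le>m. int (v ! l) = int (u ! l) - (if l = i then s else 0)
                     + (if l = Suc i then s else 0) + (if l = 0 then int n * t else 0)"
    using assms unfolding yoke_move_def by blast
  then have "i \<le> m" "\<bar>-s\<bar> = 1"
    and "\<forall>l\<le>m. int (u ! l) = int (v ! l) - (if l = i then -s else 0)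
                     + (if l = Suc i then -s else 0) + (if l = 0 then int n * (-t) else 0)"
    by auto
  then show ?thesis unfolding yoke_move_def by blast
qed

lemma yoke_adj_sym: "yoke_adj n m u v \<Longrightarrow> yoke_adj n m v u"
  by (meson yoke_adj_def yoke_adj_if_move yoke_move_if_adj yoke_move_sym)

lemma height_sum_cong_if_yoke_move:
  assumes "yoke_move n m u v"
  shows "\<exists>s. \<bar>s\<bar> = 1 \<and> [height_sum m v = height_sum m u + s] (mod int (n * (m + 1)))"
proof -
  obtain i s t where i: "i \<le> m" and s: "\<bar>s\<bar> = 1"
    and entries: "\<forall>l\<le>m. int (v ! l) = int (u ! l) - (if l = i then s else 0)
                     + (if l = Suc i then s else 0) + (if l = 0 then int n * t else 0)"
    using assms unfolding yoke_move_def by blast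
  have "height_sum m v = (\<Sum>j\<le>m. height u j - (if j = i then s else 0) + int n * t)"
    unfolding height_sum_def using height_transfer[OF entries] by (intro sum.cong) auto
  also have "\<dots> = height_sum m u - s + int (n * (m + 1)) * t"
    using i by (simp add: height_sum_def sum.distrib sum_subtractf algebra_simps)
  finally have "[height_sum m u + - s = height_sum m v] (mod int (n * (m + 1)))"
    unfolding cong_iff_lin by simp
  with s show ?thesis by (intro exI[of _ "-s"]) (simp add: cong_sym)
qed

lemma height_sum_cong_if_walk:
  assumes "walk_in S (yoke_adj n m) xs"
  shows "\<exists>e. \<bar>e\<bar> \<le> int (length xs) - 1 \<and>
             [height_sum m (last xs) = height_sum m (hd xs) + e] (mod int (n * (m + 1)))"
  using assms
proof (induction xs rule: induct_list012)
  case 1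
  then show ?case by (simp add: walk_in_def)
next
  case (2 x)
  then show ?case by (intro exI[of _ 0]) simp
next
  case (3 x y zs)
  from "3.prems" have edge: "yoke_adj n m x y" and walk: "walk_in S (yoke_adj n m) (y # zs)"
    by (simp_all add: walk_in_Cons_Cons)
  obtain e where e: "\<bar>e\<bar> \<le> int (length (y # zs)) - 1"
    "[height_sum m (last (y # zs)) = height_sum m y + e] (mod int (n * (m + 1)))"
    using "3.IH"(2)[OF walk] by auto
  obtain s where s: "\<bar>s\<bar> = 1" "[height_sum m y = height_sum m x + s] (mod int (n * (m + 1)))"
    using height_sum_cong_if_yoke_move[OF yoke_move_if_adj[OF edge]] by blast
  have "[height_sum m (last (x # y # zs)) = height_sum m x + (s + e)] (mod int (n * (m + 1)))"
    using cong_trans[OF e(2) cong_add[OF s(2) cong_refl]] by (simp add: add.assoc)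
  moreover have "\<bar>s + e\<bar> \<le> int (length (x # y # zs)) - 1"
    using e(1) s(1) by simp
  ultimately show ?case by auto
qed

lemma induced_dist_ge_if_height_sum_cong:
  assumes "2 * K \<le> n * (m + 1)"
    and "[height_sum m y = height_sum m x + int K] (mod int (n * (m + 1)))"
  shows "enat K \<le> induced_dist S (yoke_adj n m) x y"
  unfolding induced_dist_def
proof (rule INF_greatest)
  fix xs assume "xs \<in> {xs. walk_in S (yoke_adj n m) xs \<and> hd xs = x \<and> last xs = y}"
  then have walk: "walk_in S (yoke_adj n m) xs" and ends: "hd xs = x" "last xs = y" by auto
  obtain e where e: "\<bar>e\<bar> \<le> int (length xs) - 1"
    and "[height_sum m y = height_sum m x + e] (mod int (n * (m + 1)))"
    using height_sum_cong_if_walk[OF walk] ends by blast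
  with assms(2) have "[height_sum m x + int K = height_sum m x + e] (mod int (n * (m + 1)))"
    using cong_sym cong_trans by blast
  then have dvd: "int (n * (m + 1)) dvd int K - e"
    by (simp add: cong_iff_dvd_diff)
  show "enat K \<le> enat (length xs - 1)"
  proof (rule ccontr)
    assume "\<not> ?thesis"
    with e have short: "\<bar>e\<bar> < int K" by simp
    then have "int (n * (m + 1)) \<le> int K - e"
      using dvd by (intro zdvd_imp_le) auto
    with short assms(1) show False by linarith
  qed
qed

lemma exists_lowerable_bucket:
  assumes "yoke_vert n m b" and "\<exists>i\<le>m. height b i < height a i"
  shows "\<exists>k\<le>m. height b k < height a k \<and> 0 < a ! k \<and> (k < m \<longrightarrow> a ! Suc k = 0)"
proof -
  define Q where "Q = {k. k \<le> m \<and> height b k < height a k \<and> 0 < a ! k}"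
  obtain k1 where k1: "k1 \<le> m" "height b k1 < height a k1"
    and below: "\<forall>p<k1. \<not> (p \<le> m \<and> height b p < height a p)"
    using assms(2) exists_least_iff[of "\<lambda>k. k \<le> m \<and> height b k < height a k"] by blast
  have "k1 \<in> Q"
  proof (cases k1)
    case (Suc p)
    with k1 below have "height a p \<le> height b p" by auto
    with k1 Suc show ?thesis unfolding Q_def by (auto simp: height_Suc)
  qed (use k1 in \<open>auto simp: Q_def\<close>)
  define k where "k = Max Q"
  have "finite Q" unfolding Q_def by simp
  with \<open>k1 \<in> Q\<close> have "k \<in> Q" and k_max: "\<And>j. j \<in> Q \<Longrightarrow> j \<le> k"
    unfolding k_def using Max_in Max_ge by blast+
  moreover have "a ! Suc k = 0" if "k < m"
  proof (rule ccontr)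
    assume "a ! Suc k \<noteq> 0"
    moreover have "b ! Suc k \<le> 1" using assms(1) that by (simp add: yoke_vert_def)
    ultimately have "Suc k \<in> Q"
      using \<open>k \<in> Q\<close> that unfolding Q_def by (auto simp: height_Suc)
    then show False using k_max by fastforce
  qed
  ultimately show ?thesis unfolding Q_def by blast
qed

lemma yoke_adj_lower_bucket:
  assumes "yoke_vert n m a" and "k \<le> m" and "0 < a ! k" and "k < m \<longrightarrow> a ! Suc k = 0"
  shows "\<exists>a'. yoke_adj n m a a' \<and> (\<forall>j\<le>m. height a' j = height a j - (if j = k then 1 else 0))"
proof -
  \<comment> \<open>For k = m the second update is out of range: the unit goes to the implicit bucket m + 1.\<close>
  define a' where "a' = a[k := a ! k - 1, Suc k := a ! Suc k + 1]"
  have len: "length a = Suc m" using assms(1) by (simp add: yoke_vert_def)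
  have entries: "\<forall>l\<le>m. int (a' ! l) = int (a ! l) - (if l = k then 1 else 0)
                          + (if l = Suc k then 1 else 0) + (if l = 0 then int n * 0 else 0)"
    using assms(2-4) len by (auto simp: a'_def nth_list_update list_update_beyond)
  have "yoke_vert n m a'"
    unfolding yoke_vert_def
  proof (intro conjI ballI)
    show "length a' = m + 1" using len by (simp add: a'_def)
    show "a' ! 0 < n" using entries[rule_format, of 0] assms(1) by (auto simp: yoke_vert_def split: if_splits)
    fix j assume j: "j \<in> {1..m}"
    with assms(1) have "a ! j \<le> 1" by (simp add: yoke_vert_def)
    with j show "a' ! j \<le> 1"
      using entries[rule_format, of j] assms(4) by (auto split: if_splits)
  qed
  moreover have "yoke_move n m a a'"
    unfolding yoke_move_def using assms(2) entries abs_one by blast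
  ultimately have "yoke_adj n m a a'"
    using assms(1) yoke_adj_if_move by blast
  then show ?thesis using height_transfer[OF entries] by auto
qed

lemma unit_steps_diff_le:
  fixes f :: "nat \<Rightarrow> int"
  assumes steps: "\<forall>j<m. \<bar>f (Suc j) - f j\<bar> \<le> 1" and "j \<le> i" and "i \<le> m"
  shows "\<bar>f i - f j\<bar> \<le> int (i - j)"
  using assms(2,3)
proof (induction i rule: dec_induct)
  case (step i)
  with steps have "\<bar>f (Suc i) - f i\<bar> \<le> 1" by simp
  with step show ?case by linarith
qed simp

lemma sum_abs_diff_le:
  "z \<le> m \<Longrightarrow> 2 * (\<Sum>i\<le>m. \<bar>int i - int z\<bar>) \<le> int (m * (m + 1))"
proof (induction m arbitrary: z)
  case (Suc m)
  show ?case
  proof (cases "z \<le> m")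
    case True
    with Suc.IH[OF True] show ?thesis by (simp add: algebra_simps)
  next
    case False
    then have "z = Suc m" using Suc.prems by simp
    define S where "S = (\<Sum>i\<le>m. \<bar>int i - int m\<bar>)"
    have "(\<Sum>i\<le>Suc m. \<bar>int i - int z\<bar>) = (\<Sum>i\<le>m. \<bar>int i - int z\<bar>)"
      using \<open>z = Suc m\<close> by simp
    also have "\<dots> = (\<Sum>i\<le>m. \<bar>int i - int m\<bar> + 1)"
      using \<open>z = Suc m\<close> by (intro sum.cong) auto
    also have "\<dots> = S + int (Suc m)"
      unfolding S_def by (simp only: sum.distrib) simp
    finally show ?thesis
      using Suc.IH[OF order_refl] unfolding S_def[symmetric] by (simp add: algebra_simps)
  qed
qed simp

lemma unit_steps_sum_abs_le:
  fixes f :: "nat \<Rightarrow> int"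
  assumes steps: "\<forall>j<m. \<bar>f (Suc j) - f j\<bar> \<le> 1" and "z \<le> m" and "f z = 0"
  shows "2 * (\<Sum>i\<le>m. \<bar>f i\<bar>) \<le> int (m * (m + 1))"
proof -
  have "\<bar>f i\<bar> \<le> \<bar>int i - int z\<bar>" if "i \<le> m" for i
    using unit_steps_diff_le[OF steps, of z i] unit_steps_diff_le[OF steps, of i z] that assms(2,3)
    by (cases "z \<le> i") auto
  then have "(\<Sum>i\<le>m. \<bar>f i\<bar>) \<le> (\<Sum>i\<le>m. \<bar>int i - int z\<bar>)"
    by (intro sum_mono) auto
  with sum_abs_diff_le[OF assms(2)] show ?thesis by linarith
qed

lemma unit_steps_zero_between:
  fixes f :: "nat \<Rightarrow> int"
  assumes steps: "\<forall>j<m. \<bar>f (Suc j) - f j\<bar> \<le> 1"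
  shows "p \<le> q \<Longrightarrow> q \<le> m \<Longrightarrow> f p \<le> 0 \<Longrightarrow> 0 \<le> f q \<Longrightarrow>
           \<exists>z. p \<le> z \<and> z \<le> q \<and> f z = 0"
proof (induction q)
  case (Suc q)
  show ?case
  proof (cases "f (Suc q) = 0")
    case False
    have "\<bar>f (Suc q) - f q\<bar> \<le> 1" using steps Suc.prems(2) by simp
    with False Suc.prems have "p \<noteq> Suc q" "0 \<le> f q" by auto
    with Suc show ?thesis by (metis le_SucI le_Suc_eq Suc_leD)
  qed (use Suc.prems in auto)
qed auto

lemma unit_steps_sign_cases:
  fixes f :: "nat \<Rightarrow> int"
  assumes steps: "\<forall>j<m. \<bar>f (Suc j) - f j\<bar> \<le> 1"
  shows "(\<exists>z\<le>m. f z = 0) \<or> (\<forall>j\<le>m. 0 \<le> f j) \<or> (\<forall>j\<le>m. f j \<le> 0)"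
proof (rule ccontr)
  assume "\<not> ?thesis"
  then have "\<exists>p\<le>m. f p < 0" "\<exists>q\<le>m. 0 < f q" "\<forall>z\<le>m. f z \<noteq> 0"
    by auto
  then obtain p q where "p \<le> m" "f p < 0" "q \<le> m" "0 < f q" and no_zero: "\<forall>z\<le>m. f z \<noteq> 0"
    by blast
  moreover have "\<forall>j<m. \<bar>(- f) (Suc j) - (- f) j\<bar> \<le> 1"
    using steps by (simp add: abs_minus_commute)
  ultimately show False
    using unit_steps_zero_between[OF steps, of p q] unit_steps_zero_between[of m "- f" q p]
    by (cases "p \<le> q") force+
qed

locale yoke_interval =
  fixes n m :: nat and lo hi :: "nat list"
  assumes m_le_n: "m \<le> n"
    and lo_vert: "yoke_vert n m lo" and hi_vert: "yoke_vert n m hi"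
    and hi_entries: "\<forall>l\<le>m. int (hi ! l) = int (lo ! l) + (if l = 0 then int n - 1 else 0)
                                                    + (if l = 1 then 1 else 0)"
begin

abbreviation I :: "nat list set" where
  "I \<equiv> dom_interval n m lo hi"

abbreviation N :: nat where
  "N \<equiv> n * (m + 1)"

lemma hi_entries_move:
  "\<forall>l\<le>m. int (hi ! l) = int (lo ! l) - (if l = 0 then 1 else 0) + (if l = Suc 0 then 1 else 0)
                          + (if l = 0 then int n * 1 else 0)"
  using hi_entries by auto

lemma height_hi: "j \<le> m \<Longrightarrow> height hi j = height lo j + int n - (if j = 0 then 1 else 0)"
  using height_transfer[OF hi_entries_move] by simp

lemma N_pos: "0 < N"
  using lo_vert by (simp add: yoke_vert_def)

lemma height_sum_hi: "height_sum m hi = height_sum m lo + int N - 1"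
proof -
  have "height_sum m hi = (\<Sum>j\<le>m. height lo j + int n - (if j = 0 then 1 else 0))"
    unfolding height_sum_def using height_hi by (intro sum.cong) auto
  then show ?thesis
    by (simp add: height_sum_def sum.distrib sum_subtractf algebra_simps)
qed

lemma mem_I_iff:
  "x \<in> I \<longleftrightarrow> yoke_vert n m x \<and> (\<forall>i\<le>m. height lo i \<le> height x i \<and> height x i \<le> height hi i)"
  unfolding dom_interval_def dominated_iff_height by auto

lemma lo_mem: "lo \<in> I" and hi_mem: "hi \<in> I"
  using lo_vert hi_vert height_hi N_pos by (auto simp: mem_I_iff)

lemma lo_adj_hi: "yoke_adj n m lo hi"
proof (rule yoke_adj_if_move[OF lo_vert hi_vert])
  show "yoke_move n m lo hi"
    unfolding yoke_move_def using hi_entries_move abs_one by blast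
qed

lemma lower_step:
  assumes a: "a \<in> I" and b: "b \<in> I" and "\<exists>i\<le>m. height b i < height a i"
  shows "\<exists>a'\<in>I. yoke_adj n m a a' \<and> height_dist m a' b = height_dist m a b - 1
                \<and> height_sum m a' = height_sum m a - 1"
proof -
  obtain k where k: "k \<le> m" "height b k < height a k" "0 < a ! k" "k < m \<longrightarrow> a ! Suc k = 0"
    using exists_lowerable_bucket assms mem_I_iff by blast
  then obtain a' where adj: "yoke_adj n m a a'"
    and lowered: "\<forall>j\<le>m. height a' j = height a j - (if j = k then 1 else 0)"
    using yoke_adj_lower_bucket a mem_I_iff by blast
  have "yoke_vert n m a'" using adj by (simp add: yoke_adj_def)
  moreover have "height lo j \<le> height a' j \<and> height a' j \<le> height hi j" if "j \<le> m" for j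
    using lowered a b k(2) that by (cases "j = k") (auto simp: mem_I_iff)
  ultimately have "a' \<in> I" by (simp add: mem_I_iff)
  moreover have "height_dist m a' b = (\<Sum>j\<le>m. \<bar>height a j - height b j\<bar> - (if j = k then 1 else 0))"
    unfolding height_dist_def using lowered k(2) by (intro sum.cong) auto
  then have "height_dist m a' b = height_dist m a b - 1"
    using k(1) by (simp add: height_dist_def sum_subtractf)
  moreover have "height_sum m a' = (\<Sum>j\<le>m. height a j - (if j = k then 1 else 0))"
    unfolding height_sum_def using lowered by (intro sum.cong) auto
  then have "height_sum m a' = height_sum m a - 1"
    using k(1) by (simp add: height_sum_def sum_subtractf)
  ultimately show ?thesis
    using adj by blast
qed


lemma reach_in_height_dist:
  assumes "a \<in> I" and "b \<in> I"
  shows "reach_in I (yoke_adj n m) a b (nat (height_dist m a b))"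
  using assms
proof (induction "nat (height_dist m a b)" arbitrary: a b)
  case 0
  have "length a = Suc m" "length b = Suc m"
    using "0.prems" by (simp_all add: mem_I_iff yoke_vert_def)
  moreover have zero: "height_dist m a b = 0"
    using "0.hyps" height_dist_nonneg[of m a b] by simp
  ultimately have "a = b" using height_dist_eq_0_iff by blast
  with "0.prems" zero show ?case by (simp add: reach_in_refl)
next
  case (Suc t)
  have "\<not> (\<forall>i\<le>m. height a i = height b i)"
  proof
    assume "\<forall>i\<le>m. height a i = height b i"
    then have "height_dist m a b = 0" by (simp add: height_dist_def)
    with Suc.hyps(2) show False by simp
  qed
  then obtain i where "i \<le> m" "height a i \<noteq> height b i" by blast
  then consider "height b i < height a i" | "height a i < height b i" by linarith
  then have "reach_in I (yoke_adj n m) a b (Suc t)"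
  proof cases
    case 1
    then obtain a' where a': "a' \<in> I" "yoke_adj n m a a'" "height_dist m a' b = height_dist m a b - 1"
      using lower_step Suc.prems \<open>i \<le> m\<close> by blast
    with Suc.hyps(2) have "t = nat (height_dist m a' b)" by simp
    with Suc.hyps(1) a'(1) Suc.prems(2) have "reach_in I (yoke_adj n m) a' b t" by blast
    with a' Suc.prems(1) show ?thesis by (simp add: reach_in_step)
  next
    case 2
    then obtain b' where b': "b' \<in> I" "yoke_adj n m b b'" "height_dist m b' a = height_dist m b a - 1"
      using lower_step Suc.prems \<open>i \<le> m\<close> by blast
    with Suc.hyps(2) have "t = nat (height_dist m a b')" by (simp add: height_dist_commute)
    with Suc.hyps(1) b'(1) Suc.prems(1) have "reach_in I (yoke_adj n m) a b' t" by blast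
    moreover have "reach_in I (yoke_adj n m) b' b 1"
      using reach_in_edge[where E="yoke_adj n m", OF b'(1) Suc.prems(2) yoke_adj_sym[OF b'(2)]] by simp
    ultimately show ?thesis using reach_in_trans[of I _ a b' t b 1] by simp
  qed
  with Suc.hyps(2) show ?case by simp
qed


lemma exists_height_sum:
  assumes "height_sum m lo \<le> s" and "s \<le> height_sum m c" and "c \<in> I"
  shows "\<exists>x\<in>I. height_sum m x = s"
  using assms
proof (induction "nat (height_sum m c - s)" arbitrary: c)
  case 0
  then show ?case by force
next
  case (Suc t)
  have "\<exists>i\<le>m. height lo i < height c i"
  proof (rule ccontr)
    assume "\<not> ?thesis"
    then have "height_sum m c \<le> height_sum m lo"
      unfolding height_sum_def by (intro sum_mono) (simp add: not_less)
    with Suc.hyps(2) Suc.prems(1) show False by linarith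
  qed
  then obtain c' where c': "c' \<in> I" "height_sum m c' = height_sum m c - 1"
    using lower_step[OF Suc.prems(3) lo_mem] by blast
  with Suc.hyps(2) have "t = nat (height_sum m c' - s)" "s \<le> height_sum m c'"
    by linarith+
  with Suc.hyps(1) Suc.prems(1) c'(1) show ?case by blast
qed

lemma height_dist_to_hi: "a \<in> I \<Longrightarrow> height_dist m a hi = height_sum m hi - height_sum m a"
  using height_dist_eq_height_sum_diff[of m a hi] by (simp add: height_dist_commute mem_I_iff)

lemma height_dist_from_lo: "a \<in> I \<Longrightarrow> height_dist m lo a = height_sum m a - height_sum m lo"
  using height_dist_eq_height_sum_diff[of m lo a] by (simp add: height_dist_commute mem_I_iff)

lemma reach_in_through_wrap:
  assumes a: "a \<in> I" and b: "b \<in> I"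
  shows "\<exists>k. reach_in I (yoke_adj n m) a b k
             \<and> int k = int N - \<bar>height_sum m a - height_sum m b\<bar>"
proof (cases "height_sum m b \<le> height_sum m a")
  case True
  let ?k = "nat (height_dist m a hi) + 1 + nat (height_dist m lo b)"
  have "reach_in I (yoke_adj n m) a b ?k"
    using reach_in_height_dist[OF a hi_mem] reach_in_height_dist[OF lo_mem b]
      reach_in_edge[where E="yoke_adj n m", OF hi_mem lo_mem yoke_adj_sym[OF lo_adj_hi]]
    by (blast intro: reach_in_trans)
  moreover have "int ?k = int N - \<bar>height_sum m a - height_sum m b\<bar>"
    using True a b height_sum_hi height_dist_nonneg[of m a hi] height_dist_nonneg[of m lo b]
    by (simp add: height_dist_to_hi height_dist_from_lo)
  ultimately show ?thesis by blast
next
  case False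
  let ?k = "nat (height_dist m a lo) + 1 + nat (height_dist m hi b)"
  have "reach_in I (yoke_adj n m) a b ?k"
    using reach_in_height_dist[OF a lo_mem] reach_in_height_dist[OF hi_mem b]
      reach_in_edge[where E="yoke_adj n m", OF lo_mem hi_mem lo_adj_hi]
    by (blast intro: reach_in_trans)
  moreover have "int ?k = int N - \<bar>height_sum m a - height_sum m b\<bar>"
    using False a b height_sum_hi height_dist_nonneg[of m a lo] height_dist_nonneg[of m hi b]
      height_dist_to_hi[OF b] height_dist_from_lo[OF a]
    by (simp add: height_dist_commute)
  ultimately show ?thesis by blast
qed


lemma height_dist_short_or_one_signed:
  assumes a: "a \<in> I" and b: "b \<in> I"
  shows "2 * height_dist m a b \<le> int N \<or> height_dist m a b = \<bar>height_sum m a - height_sum m b\<bar>"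
proof -
  define f where "f j = height a j - height b j" for j
  have steps: "\<forall>j<m. \<bar>f (Suc j) - f j\<bar> \<le> 1"
  proof (intro allI impI)
    fix j assume "j < m"
    with a b have "a ! Suc j \<le> 1" "b ! Suc j \<le> 1" by (simp_all add: mem_I_iff yoke_vert_def)
    then show "\<bar>f (Suc j) - f j\<bar> \<le> 1" by (simp add: f_def height_Suc)
  qed
  have dist: "height_dist m a b = (\<Sum>j\<le>m. \<bar>f j\<bar>)"
    by (simp add: height_dist_def f_def)
  from unit_steps_sign_cases[OF steps] show ?thesis
  proof (elim disjE exE conjE)
    fix z assume "z \<le> m" "f z = 0"
    with unit_steps_sum_abs_le[OF steps] have "2 * height_dist m a b \<le> int (m * (m + 1))"
      by (simp add: dist)
    also have "\<dots> \<le> int N" using m_le_n by (simp only: of_nat_le_iff mult_le_mono1)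
    finally show ?thesis ..
  next
    assume "\<forall>j\<le>m. 0 \<le> f j"
    then have "height_dist m a b = height_sum m a - height_sum m b"
      by (intro height_dist_eq_height_sum_diff) (simp add: f_def)
    with height_dist_nonneg show ?thesis by (metis abs_of_nonneg)
  next
    assume "\<forall>j\<le>m. f j \<le> 0"
    then have "height_dist m b a = height_sum m b - height_sum m a"
      by (intro height_dist_eq_height_sum_diff) (simp add: f_def)
    with height_dist_nonneg show ?thesis by (metis abs_minus_commute abs_of_nonneg height_dist_commute)
  qed
qed

lemma induced_dist_le_half:
  assumes a: "a \<in> I" and b: "b \<in> I"
  shows "induced_dist I (yoke_adj n m) a b \<le> enat (N div 2)"
proof -
  obtain k where reach: "reach_in I (yoke_adj n m) a b k" and short: "2 * k \<le> N"
  proof (cases "2 * height_dist m a b \<le> int N")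
    case True
    then have "2 * nat (height_dist m a b) \<le> N" by linarith
    with reach_in_height_dist[OF a b] show ?thesis by (rule that)
  next
    case False
    with height_dist_short_or_one_signed[OF a b]
    have "height_dist m a b = \<bar>height_sum m a - height_sum m b\<bar>" by blast
    with reach_in_through_wrap[OF a b] obtain k
      where reach: "reach_in I (yoke_adj n m) a b k" and "int k = int N - height_dist m a b" by auto
    with False have "2 * k \<le> N" by linarith
    with reach show ?thesis by (rule that)
  qed
  from reach have "induced_dist I (yoke_adj n m) a b \<le> enat k"
    by (rule induced_dist_le_reach_in)
  also have "\<dots> \<le> enat (N div 2)" using short by simp
  finally show ?thesis .
qed

lemma induced_diam_eq: "induced_diam I (yoke_adj n m) = enat (N div 2)"
proof (rule antisym)
  show "induced_diam I (yoke_adj n m) \<le> enat (N div 2)"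
    unfolding induced_diam_def by (intro SUP_least induced_dist_le_half)
next
  have "N div 2 < N" using N_pos by simp
  with height_sum_hi have "height_sum m lo \<le> height_sum m lo + int (N div 2)"
    "height_sum m lo + int (N div 2) \<le> height_sum m hi" by linarith+
  then obtain y where "y \<in> I" "height_sum m y = height_sum m lo + int (N div 2)"
    using exists_height_sum[OF _ _ hi_mem] by blast
  then have "enat (N div 2) \<le> induced_dist I (yoke_adj n m) lo y"
    by (intro induced_dist_ge_if_height_sum_cong) auto
  also have "\<dots> \<le> induced_diam I (yoke_adj n m)"
    unfolding induced_diam_def using lo_mem \<open>y \<in> I\<close> by (blast intro: SUP_upper2)
  finally show "enat (N div 2) \<le> induced_diam I (yoke_adj n m)" .
qed

end

lemma length_yoke_u0: "1 \<le> m \<Longrightarrow> length (yoke_u0 n m) = Suc m"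
  by (simp add: yoke_u0_def)

lemma length_yoke_u1: "1 \<le> m \<Longrightarrow> length (yoke_u1 m) = Suc m"
  by (simp add: yoke_u1_def)

lemma nth_yoke_u0:
  "1 \<le> m \<Longrightarrow> j \<le> m \<Longrightarrow> yoke_u0 n m ! j = (if j = 0 then n - 1 else if j = 1 then 1 else 0)"
  by (auto simp: yoke_u0_def nth_append nth_Cons')

lemma nth_yoke_u1: "1 \<le> m \<Longrightarrow> j \<le> m \<Longrightarrow> yoke_u1 m ! j = (if j \<le> 1 then 0 else 1)"
  by (auto simp: yoke_u1_def nth_append nth_Cons')

lemma nth_yoke_top: "j \<le> m \<Longrightarrow> yoke_top n m ! j = (if j = 0 then n - 1 else 1)"
  by (auto simp: yoke_top_def nth_Cons')

lemma yoke_interval_I0: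
  assumes "1 \<le> m" and "m \<le> n"
  shows "yoke_interval n m (yoke_bot m) (yoke_u0 n m)"
  using assms by unfold_locales (auto simp: yoke_vert_def yoke_bot_def length_yoke_u0 nth_yoke_u0)

lemma yoke_interval_I1:
  assumes "1 \<le> m" and "m \<le> n"
  shows "yoke_interval n m (yoke_u1 m) (yoke_top n m)"
  using assms
  by unfold_locales (auto simp: yoke_vert_def yoke_top_def length_yoke_u1 nth_yoke_u1 nth_yoke_top)

theorem lemma5p14:
  fixes n m :: nat
  assumes "2 \<le> m" and "m \<le> n"
  shows "induced_diam (yoke_I0 n m) (yoke_adj n m) = enat (n * (m + 1) div 2)
       \<and> induced_diam (yoke_I1 n m) (yoke_adj n m) = enat (n * (m + 1) div 2)"
proof -
  from assms have "1 \<le> m" by simp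
  with assms(2) show ?thesis
    unfolding yoke_I0_def yoke_I1_def
    using yoke_interval.induced_diam_eq[OF yoke_interval_I0]
      yoke_interval.induced_diam_eq[OF yoke_interval_I1]
    by blast
qed

end
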